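(* Let $\alpha$ be a concentrated system of weights for rank $r$ over $D$ (with $|D|=n$), and let $I=\{1,\dots,r\}$. Let $0<r'<r$ and for each $x\in D$ let $I'(x)\subsetneq I$ be a nonempty subset with $|I'(x)|=r'$. Then $$\left|\sum_{x\in D}\left(r\sum_{i\in I'(x)}\alpha_i(x)-r'\sum_{i\in I}\alpha_i(x)\right)\right|<1.$$
   Context: A full flag system of weights for rank $r$ over a finite set $D$ of $n\ge1$ points is $\alpha=\{(\alpha_1(x),\dots,\alpha_r(x))\}_{x\in D}$ with $0\le\alpha_1(x)<\cdots<\alpha_r(x)<1$. It is concentrated if $\alpha_r(x)-\alpha_1(x)<\frac{4}{nr^2}$ for all $x\in D$. *)

theory Defs
  imports Complex_Main
begin

definition full_flag_weights :: "nat \<Rightarrow> 'a set \<Rightarrow> ('a \<Rightarrow> nat \<Rightarrow> real) \<Rightarrow> bool" where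
  "full_flag_weights r D \<alpha> \<longleftrightarrow>
     finite D \<and> D \<noteq> {} \<and> r \<ge> 1 \<and>
     (\<forall>x\<in>D. 0 \<le> \<alpha> x 1 \<and> \<alpha> x r < 1 \<and>
        (\<forall>i\<in>{1..<r}. \<alpha> x i < \<alpha> x (Suc i)))"

definition concentrated :: "nat \<Rightarrow> 'a set \<Rightarrow> ('a \<Rightarrow> nat \<Rightarrow> real) \<Rightarrow> bool" where
  "concentrated r D \<alpha> \<longleftrightarrow> full_flag_weights r D \<alpha> \<and>
     (\<forall>x\<in>D. \<alpha> x r - \<alpha> x 1 < 4 / (real (card D) * real r ^ 2))"

end

theory Submission
  imports Defs
begin

text \<open>For a single point x with index set J of size r', the summand
  r (sum of alpha_j over J) - r' (sum of alpha_i over I) equals the sum of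
  alpha_j - alpha_k over the r'(r - r') pairs with j in J and k not in J.
  All weights of x lie in [alpha_1, alpha_r], so the summand is at most
  r'(r - r') \<le> r^2/4 times the spread alpha_r - alpha_1, which concentration
  makes smaller than 1/n. Summing over the n points of D gives the bound 1.\<close>

lemma le_of_Suc_le_on_interval:
  fixes f :: "nat \<Rightarrow> 'b::preorder"
  assumes "\<And>k. k \<in> {a..<b} \<Longrightarrow> f k \<le> f (Suc k)"
    and "a \<le> i" "i \<le> j" "j \<le> b"
  shows "f i \<le> f j"
  using \<open>i \<le> j\<close> \<open>j \<le> b\<close>
proof (induction j rule: dec_induct)
  case (step j)
  then have "f i \<le> f j" by simp
  also have "f j \<le> f (Suc j)" using assms(2) step.hyps step.prems by (intro assms(1)) auto
  finally show ?case .
qed simp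

lemma full_flag_weights_range:
  assumes "full_flag_weights r D \<alpha>" "x \<in> D" "i \<in> {1..r}"
  shows "\<alpha> x 1 \<le> \<alpha> x i \<and> \<alpha> x i \<le> \<alpha> x r"
proof -
  have "\<alpha> x k \<le> \<alpha> x (Suc k)" if "k \<in> {1..<r}" for k
    using assms(1,2) that unfolding full_flag_weights_def by (auto intro: less_imp_le)
  then show ?thesis
    using assms(3) le_of_Suc_le_on_interval[of 1 r "\<alpha> x"] by auto
qed

lemma sum_pairwise_diff:
  fixes f :: "'a \<Rightarrow> real"
  assumes "finite J" "finite K"
  shows "(\<Sum>j\<in>J. \<Sum>k\<in>K. f j - f k) = real (card K) * sum f J - real (card J) * sum f K"
  by (simp add: sum_subtractf sum.swap[of _ J K] sum_distrib_right[symmetric] mult.commute)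

lemma card_weighted_sum_deviation:
  fixes f :: "'a \<Rightarrow> real"
  assumes "finite A" "J \<subseteq> A" and bounds: "\<And>i. i \<in> A \<Longrightarrow> a \<le> f i \<and> f i \<le> b"
  shows "\<bar>real (card A) * sum f J - real (card J) * sum f A\<bar>
           \<le> real (card J) * real (card (A - J)) * (b - a)"
proof -
  let ?K = "A - J"
  have fin: "finite J" "finite ?K" using assms(1,2) finite_subset by auto
  have card_split: "card A = card J + card ?K"
    using assms(1,2) by (metis card_Diff_subset card_mono finite_subset le_add_diff_inverse)
  have sum_split: "sum f A = sum f J + sum f ?K"
    using assms(1,2) by (metis add.commute sum.subset_diff)
  have "real (card A) * sum f J - real (card J) * sum f A
          = real (card ?K) * sum f J - real (card J) * sum f ?K"
    by (simp add: card_split sum_split algebra_simps)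
  also have "\<dots> = (\<Sum>j\<in>J. \<Sum>k\<in>?K. f j - f k)"
    using fin by (simp add: sum_pairwise_diff)
  finally have "\<bar>real (card A) * sum f J - real (card J) * sum f A\<bar>
                  = \<bar>\<Sum>j\<in>J. \<Sum>k\<in>?K. f j - f k\<bar>"
    by (rule arg_cong)
  also have "\<dots> \<le> (\<Sum>j\<in>J. \<Sum>k\<in>?K. \<bar>f j - f k\<bar>)"
    by (rule order.trans[OF sum_abs sum_mono[OF sum_abs]])
  also have "\<dots> \<le> (\<Sum>j\<in>J. \<Sum>k\<in>?K. b - a)"
  proof (intro sum_mono)
    fix j k assume "j \<in> J" "k \<in> ?K"
    then have "a \<le> f j" "f j \<le> b" "a \<le> f k" "f k \<le> b" using assms(2) bounds by auto
    then show "\<bar>f j - f k\<bar> \<le> b - a" by (simp add: abs_le_iff)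
  qed
  finally show ?thesis by simp
qed

lemma four_mult_le_square_sum:
  fixes p q :: real
  shows "4 * (p * q) \<le> (p + q)\<^sup>2"
proof -
  have "0 \<le> (p - q)\<^sup>2" by simp
  then show ?thesis by (simp add: power2_eq_square algebra_simps)
qed

lemma flag_weights_deviation_le_spread:
  assumes "full_flag_weights r D \<alpha>" "x \<in> D" "J \<subseteq> {1..r}"
  shows "\<bar>real r * (\<Sum>i\<in>J. \<alpha> x i) - real (card J) * (\<Sum>i\<in>{1..r}. \<alpha> x i)\<bar>
           \<le> real r ^ 2 / 4 * (\<alpha> x r - \<alpha> x 1)"
proof -
  have spread_nonneg: "0 \<le> \<alpha> x r - \<alpha> x 1"
    using full_flag_weights_range[OF assms(1,2), of r] assms(1)
    unfolding full_flag_weights_def by auto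
  have "real (card J) * real (card ({1..r} - J)) \<le> real r ^ 2 / 4"
  proof -
    have "card J \<le> r" using assms(3) card_mono[of "{1..r}" J] by simp
    then show ?thesis
      using four_mult_le_square_sum[of "real (card J)" "real (r - card J)"] assms(3)
      by (simp add: card_Diff_subset finite_subset of_nat_diff)
  qed
  moreover have "\<bar>real (card {1..r}) * (\<Sum>i\<in>J. \<alpha> x i) - real (card J) * (\<Sum>i\<in>{1..r}. \<alpha> x i)\<bar>
      \<le> real (card J) * real (card ({1..r} - J)) * (\<alpha> x r - \<alpha> x 1)"
    using full_flag_weights_range[OF assms(1,2)] assms(3)
    by (intro card_weighted_sum_deviation) auto
  ultimately show ?thesis
    using mult_right_mono[OF _ spread_nonneg] by fastforce
qed

lemma concentrated_deviation_less:
  assumes "concentrated r D \<alpha>" "x \<in> D" "J \<subseteq> {1..r}"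
  shows "\<bar>real r * (\<Sum>i\<in>J. \<alpha> x i) - real (card J) * (\<Sum>i\<in>{1..r}. \<alpha> x i)\<bar>
           < 1 / real (card D)"
proof -
  have flag: "full_flag_weights r D \<alpha>"
    and spread: "\<alpha> x r - \<alpha> x 1 < 4 / (real (card D) * real r ^ 2)"
    using assms(1,2) unfolding concentrated_def by auto
  have "r \<ge> 1" using flag unfolding full_flag_weights_def by simp
  then have "real r ^ 2 / 4 * (\<alpha> x r - \<alpha> x 1)
               < real r ^ 2 / 4 * (4 / (real (card D) * real r ^ 2))"
    using spread by (intro mult_strict_left_mono) auto
  also have "\<dots> = 1 / real (card D)"
    using \<open>r \<ge> 1\<close> by (simp add: field_simps)
  finally show ?thesis
    using flag_weights_deviation_le_spread[OF flag assms(2,3)] by linarith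
qed

theorem lemma2p5:
  fixes D :: "'a set" and r r' :: nat and \<alpha> :: "'a \<Rightarrow> nat \<Rightarrow> real"
    and I' :: "'a \<Rightarrow> nat set"
  assumes "concentrated r D \<alpha>"
    and "0 < r'" and "r' < r"
    and "\<And>x. x \<in> D \<Longrightarrow> I' x \<subseteq> {1..r} \<and> card (I' x) = r'"
  shows "\<bar>\<Sum>x\<in>D. (real r * (\<Sum>i\<in>I' x. \<alpha> x i) - real r' * (\<Sum>i\<in>{1..r}. \<alpha> x i))\<bar> < 1"
proof -
  have "finite D" "D \<noteq> {}"
    using assms(1) unfolding concentrated_def full_flag_weights_def by auto
  have pointwise: "\<bar>real r * (\<Sum>i\<in>I' x. \<alpha> x i) - real r' * (\<Sum>i\<in>{1..r}. \<alpha> x i)\<bar>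
                    < 1 / real (card D)" if "x \<in> D" for x
    using concentrated_deviation_less[OF assms(1) that, of "I' x"] assms(4)[OF that] by simp
  have "\<bar>\<Sum>x\<in>D. (real r * (\<Sum>i\<in>I' x. \<alpha> x i) - real r' * (\<Sum>i\<in>{1..r}. \<alpha> x i))\<bar>
        \<le> (\<Sum>x\<in>D. \<bar>real r * (\<Sum>i\<in>I' x. \<alpha> x i) - real r' * (\<Sum>i\<in>{1..r}. \<alpha> x i)\<bar>)"
    by (rule sum_abs)
  also have "\<dots> < (\<Sum>x\<in>D. 1 / real (card D))"
    using \<open>finite D\<close> \<open>D \<noteq> {}\<close> pointwise by (rule sum_strict_mono)
  also have "\<dots> = 1"
    using \<open>finite D\<close> \<open>D \<noteq> {}\<close> by simp
  finally show ?thesis .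
qed

end
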